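(* For $\sigma^2>0$ let $$V(\sigma^2)=\inf\Big\{\sum_{k\in\mathbb Z}k^2x_k^2:\ x\text{ real},\ \sum_kx_k^2=1,\ \sum_kx_kx_{k+1}=\tfrac{1}{\sqrt{1+\sigma^2}}\Big\}$$ (the minimal time spread of a maximally compact sequence with periodic frequency spread $\sigma^2$), and let $\eta_p=\sigma^2V(\sigma^2)$ be the corresponding time-frequency spread. Then for all $\sigma^2>0$, $$\eta_p\ \ge\ \sigma^2\Big(1-\sqrt{\tfrac{\sigma^2}{1+\sigma^2}}\Big).$$ Moreover, there exists $s_0>0$ such that for all $0<\sigma^2\le s_0$, $$\eta_p\ \le\ \frac{\sigma^2}{8}\Big(\frac{\sqrt{1+\sigma^2}}{\sqrt{1+\sigma^2}-1}-\frac12\Big).$$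
   Context: For a unit-norm real sequence centered at time $0$, $\sum_kk^2x_k^2$ is its time spread $\Delta_n^2$, and $\sum_kx_kx_{k+1}=1/\sqrt{1+\sigma^2}$ means its periodic frequency spread $\Delta_{\omega_p}^2=(1-\tau^2)/\tau^2$, $\tau=\sum_kx_kx_{k+1}$, equals $\sigma^2$. *)

theory Defs
  imports "HOL-Analysis.Analysis"
begin

definition admissible :: "real \<Rightarrow> (int \<Rightarrow> real) \<Rightarrow> bool" where
  "admissible s x \<longleftrightarrow>
     ((\<lambda>k. (x k)\<^sup>2) has_sum 1) UNIV \<and>
     ((\<lambda>k. x k * x (k + 1)) has_sum (1 / sqrt (1 + s))) UNIV \<and>
     (\<lambda>k. (real_of_int k)\<^sup>2 * (x k)\<^sup>2) summable_on UNIV"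

definition time_spread :: "(int \<Rightarrow> real) \<Rightarrow> real" where
  "time_spread x = infsum (\<lambda>k. (real_of_int k)\<^sup>2 * (x k)\<^sup>2) UNIV"

definition V :: "real \<Rightarrow> real" where
  "V s = Inf {time_spread x | x. admissible s x}"

definition eta_p :: "real \<Rightarrow> real" where
  "eta_p s = s * V s"

end

theory Submission
  imports Defs
begin

text \<open>
  Lower bound: for \<open>t > 0\<close>, weighted AM-GM bounds \<open>x_k x_(k+1)\<close> by
  \<open>t/2 x_k^2 + 1/(2t) x_(k+1)^2\<close> for \<open>k \<ge> 0\<close> and by the mirrored inequality for \<open>k < 0\<close>,
  so that every \<open>x_k^2\<close> collects total weight \<open>t/2 + 1/(2t)\<close>, except \<open>x_0^2\<close>, which collects
  \<open>t\<close>. Summing gives \<open>1/sqrt(1+s) \<le> (t/2 + 1/(2t)) (1 - x_0^2) + t x_0^2\<close>, which for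
  \<open>t = sqrt(1+s) - sqrt s\<close> says \<open>x_0^2 \<le> sqrt(s/(1+s))\<close>; the time spread is at least the
  mass \<open>1 - x_0^2\<close> away from the origin.

  Upper bound: the trial sequences combine the centred binomial sequences \<open>C(2m, m+k)\<close>,
  \<open>m = n, n+1, n+2\<close>, with coefficients depending on a parameter \<open>b\<close>. By Vandermonde's
  identity their norm, lag-one correlation and second moment are \<open>C(4n, 2n)\<close> times explicit
  polynomials in \<open>n\<close> and \<open>b\<close>. Positivity certificates show that for \<open>n \<ge> 20\<close> and
  \<open>-6/5 \<le> b \<le> 0\<close> the normalised trial sequence with correlation \<open>tau\<close> has time spread at
  most \<open>(1/(1 - tau) - 1/2)/8\<close>, and that these correlations cover every \<open>tau\<close> between the
  value at \<open>(n, b) = (20, 0)\<close> and 1, a range containing \<open>1/sqrt(1+s)\<close> for small \<open>s\<close>.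
\<close>

section \<open>Binomial coefficients on the integers\<close>

definition binom_int :: "nat \<Rightarrow> int \<Rightarrow> real" where
  "binom_int A t = (if 0 \<le> t then real (A choose nat t) else 0)"

lemma binom_int_symmetric: "binom_int A t = binom_int A (int A - t)"
proof (cases "0 \<le> t \<and> t \<le> int A")
  case True
  then have "nat (int A - t) = A - nat t" "nat t \<le> A" by auto
  with True show ?thesis by (simp add: binom_int_def binomial_symmetric[of "nat t" A])
qed (auto simp: binom_int_def)

lemma binom_int_vandermonde:
  assumes "u \<le> K" "int A - u \<le> K"
  shows "(\<Sum>k\<in>{-K..K}. binom_int A (u + k) * binom_int B (v - k)) = binom_int (A + B) (u + v)"
proof -
  have "(\<Sum>k\<in>{-K..K}. binom_int A (u + k) * binom_int B (v - k))
      = (\<Sum>k\<in>{-u..int A - u}. binom_int A (u + k) * binom_int B (v - k))"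
    by (rule sum.mono_neutral_right) (use assms in \<open>auto simp: binom_int_def\<close>)
  also have "\<dots> = (\<Sum>j\<le>A. real (A choose j) * binom_int B (u + v - int j))"
    by (rule sum.reindex_bij_witness[of _ "\<lambda>j. int j - u" "\<lambda>k. nat (u + k)"])
       (auto simp: binom_int_def)
  also have "\<dots> = binom_int (A + B) (u + v)"
  proof (cases "u + v < 0")
    case False
    then obtain r where r: "u + v = int r"
      by (metis zero_le_imp_eq_int not_less)
    have "(\<Sum>j\<le>A. real (A choose j) * binom_int B (int r - int j))
        = (\<Sum>j\<le>r. real (A choose j) * real (B choose (r - j)))"
      by (rule sum.mono_neutral_cong) (auto simp: binom_int_def nat_diff_distrib)
    also have "\<dots> = real ((A + B) choose r)"
      by (simp flip: of_nat_mult of_nat_sum add: vandermonde)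
    finally show ?thesis by (simp add: r binom_int_def)
  qed (simp add: binom_int_def)
  finally show ?thesis .
qed

lemma binom_int_correlation:
  assumes "u \<le> K" "int A - u \<le> K"
  shows "(\<Sum>k\<in>{-K..K}. binom_int A (u + k) * binom_int B (w + k)) = binom_int (A + B) (u + int B - w)"
proof -
  have "(\<Sum>k\<in>{-K..K}. binom_int A (u + k) * binom_int B (w + k))
      = (\<Sum>k\<in>{-K..K}. binom_int A (u + k) * binom_int B ((int B - w) - k))"
    by (subst binom_int_symmetric[of B]) (simp add: algebra_simps)
  also have "\<dots> = binom_int (A + B) (u + (int B - w))"
    by (rule binom_int_vandermonde[OF assms])
  finally show ?thesis by (simp add: add_diff_eq)
qed

definition cbinom :: "nat \<Rightarrow> int \<Rightarrow> real" where
  "cbinom m k = binom_int (2 * m) (int m + k)"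

definition central_binom :: "nat \<Rightarrow> real" where
  "central_binom q = real ((2 * q) choose q)"

lemma cbinom_eq_0: "k \<notin> {- int m..int m} \<Longrightarrow> cbinom m k = 0"
  by (auto simp: cbinom_def binom_int_def)

lemma central_binom_pos: "central_binom q > 0"
  by (simp add: central_binom_def)

lemma central_binom_Suc: "real (Suc q) * central_binom (Suc q) = 2 * (2 * real q + 1) * central_binom q"
proof -
  define X where "X = real ((2*q + 1) choose q)"
  have "2 * Suc q = Suc (2*q + 1)" by simp
  then have c: "central_binom (Suc q) = real (Suc (2*q + 1) choose Suc q)"
    by (simp only: central_binom_def)
  have "real (Suc q * (Suc (2*q + 1) choose Suc q)) = real (Suc (2*q + 1) * ((2*q + 1) choose q))"
    by (simp only: Suc_times_binomial)
  then have a: "real (Suc q) * central_binom (Suc q) = 2 * (real q + 1) * X"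
    unfolding c X_def of_nat_mult by simp
  have "Suc (2*q) choose Suc q = (2*q + 1) choose q"
    using binomial_symmetric[of q "2*q + 1"] by simp
  then have "Suc (2*q) * ((2*q) choose q) = ((2*q + 1) choose q) * Suc q"
    using Suc_times_binomial_eq[of "2*q" q] by simp
  then have "real (Suc (2*q)) * central_binom q = X * real (Suc q)"
    unfolding central_binom_def X_def by (metis of_nat_mult)
  then have b: "(real q + 1) * X = (2 * real q + 1) * central_binom q"
    by (simp add: algebra_simps)
  show ?thesis
    unfolding a using b by (simp add: algebra_simps)
qed

lemma binom_int_below_central: "(real q + 1) * binom_int (2 * q) (int q - 1) = real q * central_binom q"
proof (cases q)
  case (Suc p)
  have "2 * Suc p = Suc (p + Suc p)" by simp
  then have c: "central_binom (Suc p) = real (Suc (p + Suc p) choose Suc p)"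
    and d: "binom_int (2 * Suc p) (int (Suc p) - 1) = real (Suc (p + Suc p) choose p)"
    by (simp_all only: central_binom_def) (simp add: binom_int_def)
  have "real (Suc p * (Suc (p + Suc p) choose Suc p)) = real (Suc (Suc p) * (Suc (p + Suc p) choose p))"
    by (simp only: Suc_times_binomial_add)
  then show ?thesis
    unfolding Suc c d of_nat_mult by (simp add: algebra_simps)
qed (simp add: binom_int_def)

lemma cbinom_inner:
  assumes "int m \<le> K"
  shows "(\<Sum>k\<in>{-K..K}. cbinom m k * cbinom l k) = central_binom (m + l)"
proof -
  have "(\<Sum>k\<in>{-K..K}. cbinom m k * cbinom l k) = binom_int (2*m + 2*l) (int m + int (2*l) - int l)"
    unfolding cbinom_def by (rule binom_int_correlation) (use assms in auto)
  also have "\<dots> = central_binom (m + l)"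
    by (simp add: binom_int_def central_binom_def nat_add_distrib algebra_simps)
  finally show ?thesis .
qed

lemma cbinom_inner_shift:
  assumes "int m \<le> K"
  shows "(real (m + l) + 1) * (\<Sum>k\<in>{-K..K}. cbinom m k * cbinom l (k + 1))
    = real (m + l) * central_binom (m + l)"
proof -
  have "(\<Sum>k\<in>{-K..K}. cbinom m k * cbinom l (k + 1))
      = (\<Sum>k\<in>{-K..K}. binom_int (2*m) (int m + k) * binom_int (2*l) ((int l + 1) + k))"
    unfolding cbinom_def by (simp add: algebra_simps)
  also have "\<dots> = binom_int (2*m + 2*l) (int m + int (2*l) - (int l + 1))"
    by (rule binom_int_correlation) (use assms in auto)
  also have "\<dots> = binom_int (2 * (m + l)) (int (m + l) - 1)"
    by (simp add: algebra_simps)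
  finally show ?thesis
    using binom_int_below_central[of "m + l"] by simp
qed

lemma of_int_mult_cbinom:
  assumes "1 \<le> m"
  shows "of_int k * cbinom m k
    = real m * (binom_int (2*m - 1) (int m - 1 + k) - binom_int (2*m - 1) (int m + k))"
proof -
  define j where "j = int m + k"
  have "(of_int j - real m) * binom_int (2*m) j
      = real m * (binom_int (2*m - 1) (j - 1) - binom_int (2*m - 1) j)"
  proof (cases "j \<le> 0")
    case True
    then show ?thesis
      using assms by (cases "j = 0") (auto simp: binom_int_def)
  next
    case False
    then obtain i where j: "j = int (Suc i)"
      by (metis Suc_pred' not_le of_nat_0_less_iff zero_le_imp_eq_int le_less)
    have a: "real (Suc i) * real ((2*m) choose Suc i) = 2 * real m * real ((2*m - 1) choose i)"
      using arg_cong[OF times_binomial_minus1_eq[of "Suc i" "2*m"], of real] by (simp add: algebra_simps)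
    show ?thesis
    proof (cases "Suc i \<le> 2*m")
      case True
      have "(2 * real m - real (Suc i)) * real ((2*m) choose Suc i)
          = 2 * real m * real ((2*m - 1) choose Suc i)"
        using arg_cong[OF binomial_absorb_comp[of "2*m" "Suc i"], of real] True
        by (simp add: of_nat_diff)
      moreover have "nat (1 + int i) = Suc i" by simp
      ultimately show ?thesis
        using a by (simp add: j binom_int_def algebra_simps)
    next
      case False
      then show ?thesis
        using assms by (simp add: j binom_int_def binomial_eq_0)
    qed
  qed
  then show ?thesis
    by (simp add: j_def cbinom_def algebra_simps)
qed

lemma cbinom_moment_binom:
  assumes "1 \<le> m" "1 \<le> l" "int m \<le> K"
  defines "p \<equiv> m + l - 1"
  shows "(\<Sum>k\<in>{-K..K}. (of_int k)\<^sup>2 * (cbinom m k * cbinom l k))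
    = 2 * real m * real l * (central_binom p - binom_int (2*p) (int p - 1))"
proof -
  define h where "h j t = binom_int (2*j - 1) (int j - 1 + t)" for j t
  define B where "B t = binom_int (2*p) t" for t
  have conv: "(\<Sum>k\<in>{-K..K}. h m (k + d) * h l (k + e)) = B (int p + d - e)"
    if "d \<in> {0, 1}" for d e :: int
  proof -
    have "(\<Sum>k\<in>{-K..K}. h m (k + d) * h l (k + e))
        = (\<Sum>k\<in>{-K..K}. binom_int (2*m - 1) ((int m - 1 + d) + k) * binom_int (2*l - 1) ((int l - 1 + e) + k))"
      by (simp add: h_def algebra_simps)
    also have "\<dots> = binom_int (2*m - 1 + (2*l - 1)) ((int m - 1 + d) + int (2*l - 1) - (int l - 1 + e))"
      by (rule binom_int_correlation) (use assms that in auto)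
    also have "2*m - 1 + (2*l - 1) = 2*p"
      using assms by (simp add: p_def)
    finally show ?thesis
      using assms by (simp add: B_def p_def of_nat_diff algebra_simps)
  qed
  have index: "of_int k * cbinom j k = real j * (h j k - h j (k + 1))" if "1 \<le> j" for j k
    using of_int_mult_cbinom[OF that, of k] by (simp add: h_def algebra_simps)
  have "(\<Sum>k\<in>{-K..K}. (of_int k)\<^sup>2 * (cbinom m k * cbinom l k))
      = (\<Sum>k\<in>{-K..K}. real m * real l * (h m k * h l k - h m k * h l (k + 1)
          - h m (k + 1) * h l k + h m (k + 1) * h l (k + 1)))"
  proof (rule sum.cong)
    fix k
    have "(of_int k)\<^sup>2 * (cbinom m k * cbinom l k) = (of_int k * cbinom m k) * (of_int k * cbinom l k)"
      by (simp add: power2_eq_square ac_simps)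
    then show "(of_int k)\<^sup>2 * (cbinom m k * cbinom l k) = real m * real l * (h m k * h l k - h m k * h l (k + 1)
          - h m (k + 1) * h l k + h m (k + 1) * h l (k + 1))"
      unfolding index[OF assms(1)] index[OF assms(2)] by (simp add: algebra_simps)
  qed simp
  also have "\<dots> = real m * real l * (2 * B p - B (int p - 1) - B (int p + 1))"
    using conv[of 0 0] conv[of 0 1] conv[of 1 0] conv[of 1 1]
    by (simp add: sum_distrib_left[symmetric] sum.distrib sum_subtractf algebra_simps)
  also have "B (int p + 1) = B (int p - 1)"
    unfolding B_def by (subst binom_int_symmetric) (simp add: algebra_simps)
  also have "B p = central_binom p"
    by (simp add: B_def binom_int_def central_binom_def)
  finally show ?thesis
    by (simp add: B_def algebra_simps)
qed

lemma cbinom_moment: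
  assumes "1 \<le> m" "1 \<le> l" "int m \<le> K"
  shows "real (m + l) * (\<Sum>k\<in>{-K..K}. (of_int k)\<^sup>2 * (cbinom m k * cbinom l k))
    = 2 * real m * real l * central_binom (m + l - 1)"
proof -
  define p where "p = m + l - 1"
  have "real (m + l) = real p + 1"
    using assms by (simp add: p_def)
  moreover have "(real p + 1) * binom_int (2*p) (int p - 1) = real p * central_binom p"
    by (rule binom_int_below_central)
  ultimately show ?thesis
    unfolding cbinom_moment_binom[OF assms] p_def[symmetric] by (simp add: algebra_simps)
qed

lemma cbinom_moment_central:
  assumes "1 \<le> m" "1 \<le> l" "int m \<le> K"
  shows "(2 * real (m + l) - 1) * (\<Sum>k\<in>{-K..K}. (of_int k)\<^sup>2 * (cbinom m k * cbinom l k))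
    = real m * real l * central_binom (m + l)"
proof -
  define p where "p = m + l - 1"
  have "m + l = Suc p"
    using assms by (simp add: p_def)
  have "real (Suc p) * ((2 * real (Suc p) - 1) * (\<Sum>k\<in>{-K..K}. (of_int k)\<^sup>2 * (cbinom m k * cbinom l k)))
      = real (Suc p) * (real m * real l * central_binom (Suc p))"
    using cbinom_moment[OF assms] central_binom_Suc[of p]
    unfolding \<open>m + l = Suc p\<close> by (simp add: algebra_simps)
  then show ?thesis
    unfolding \<open>m + l = Suc p\<close> by (simp only: mult_left_cancel of_nat_eq_0_iff Suc_neq_Zero not_False_eq_True)
qed

section \<open>Trial sequences\<close>

lemma sum_mult_sum_expand:
  fixes w :: "'k \<Rightarrow> real"
  shows "(\<Sum>k\<in>K. w k * ((\<Sum>i\<in>I. a i * f i k) * (\<Sum>j\<in>I. a j * g j k)))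
    = (\<Sum>i\<in>I. \<Sum>j\<in>I. a i * a j * (\<Sum>k\<in>K. w k * (f i k * g j k)))"
proof -
  have "w k * ((\<Sum>i\<in>I. a i * f i k) * (\<Sum>j\<in>I. a j * g j k))
      = w k * (\<Sum>i\<in>I. \<Sum>j\<in>I. (a i * f i k) * (a j * g j k))" for k
    by (simp only: sum_product)
  also have "\<dots> k = (\<Sum>i\<in>I. \<Sum>j\<in>I. a i * a j * (w k * (f i k * g j k)))" for k
    by (simp add: sum_distrib_left mult_ac)
  finally have pointwise: "w k * ((\<Sum>i\<in>I. a i * f i k) * (\<Sum>j\<in>I. a j * g j k))
      = (\<Sum>i\<in>I. \<Sum>j\<in>I. a i * a j * (w k * (f i k * g j k)))" for k .
  have "(\<Sum>k\<in>K. w k * ((\<Sum>i\<in>I. a i * f i k) * (\<Sum>j\<in>I. a j * g j k)))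
      = (\<Sum>k\<in>K. \<Sum>i\<in>I. \<Sum>j\<in>I. a i * a j * (w k * (f i k * g j k)))"
    by (simp only: pointwise)
  also have "\<dots> = (\<Sum>i\<in>I. \<Sum>j\<in>I. \<Sum>k\<in>K. a i * a j * (w k * (f i k * g j k)))"
    by (subst sum.swap) (simp only: sum.swap[of _ K])
  also have "\<dots> = (\<Sum>i\<in>I. \<Sum>j\<in>I. a i * a j * (\<Sum>k\<in>K. w k * (f i k * g j k)))"
    by (simp only: sum_distrib_left)
  finally show ?thesis .
qed

lemma sum_atMost_2_2:
  fixes f :: "nat \<Rightarrow> nat \<Rightarrow> real"
  shows "(\<Sum>i\<le>2. \<Sum>j\<le>2. f i j) = f 0 0 + f 0 1 + f 0 2 + f 1 0 + f 1 1 + f 1 2 + f 2 0 + f 2 1 + f 2 2"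
  by (simp add: numeral_2_eq_2)

text \<open>For the trial sequence \<open>trial_seq n b\<close>, the product of \<open>gram_denom n\<close> with its squared
  norm, lag-one correlation and second moment is \<open>16 C(4n, 2n)\<close> times these polynomials.\<close>

definition norm_poly :: "real \<Rightarrow> real \<Rightarrow> real" where
  "norm_poly r b = (- 30720 - 30720*b - 11520*b^2 - 23168*r + 39232*r*b + 28032*r*b^2 + 344243*r^2 + 257568*r^2*b + 62976*r^2*b^2 + 780898*r^3 + 278464*r^3*b + 35328*r^3*b^2 + 653384*r^4 + 114432*r^4*b + 6144*r^4*b^2 + 240640*r^5 + 16384*r^5*b + 32768*r^6)"

definition corr_poly :: "real \<Rightarrow> real \<Rightarrow> real" where
  "corr_poly r b = (15360*b + 7680*b^2 - 57600*r - 64496*r*b - 31488*r*b^2 + 72740*r^2 - 24576*r^2*b - 2304*r^2*b^2 + 482334*r^3 + 123712*r^3*b + 19968*r^3*b^2 + 535112*r^4 + 89856*r^4*b + 6144*r^4*b^2 + 224256*r^5 + 16384*r^5*b + 32768*r^6)"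

definition moment_poly :: "real \<Rightarrow> real \<Rightarrow> real" where
  "moment_poly r b = (- 3840*b^2 + 28800*r*b + 17024*r*b^2 + 41940*r^2 + 60800*r^2*b + 59904*r^2*b^2 + 143036*r^3 + 13152*r^3*b + 60032*r^3*b^2 + 214509*r^4 - 35104*r^4*b + 24576*r^4*b^2 + 162242*r^5 - 23232*r^5*b + 3584*r^5*b^2 + 59136*r^6 - 4096*r^6*b + 8192*r^7)"

definition gram_denom :: "real \<Rightarrow> real" where
  "gram_denom r = (2*r + 1) * (2*r + 2) * (2*r + 3) * (2*r + 4) * (2*r + 5) * (4*r - 1)"

definition trial_coeff :: "real \<Rightarrow> real \<Rightarrow> nat \<Rightarrow> real" where
  "trial_coeff r b i = (if i = 0 then 64 + 64*b + 16*r else if i = 1 then - 16*b - 8*r else r)"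

text \<open>The moment with \<open>i = j = 0\<close> enters in a different form: the general one would bring in
  \<open>C(4n-2, 2n-1)\<close>, and eliminating it requires a division by \<open>n\<close>.\<close>

lemma trial_gram_identities:
  fixes r b :: real and c :: "nat \<Rightarrow> real" and S C M :: "nat \<Rightarrow> nat \<Rightarrow> real"
  assumes chain: "\<And>d. d < 4 \<Longrightarrow> (2*r + real d + 1) * c (d + 1) = 2 * (4*r + 2 * real d + 1) * c d"
    and S: "\<And>i j. i \<le> 2 \<Longrightarrow> j \<le> 2 \<Longrightarrow> S i j = c (i + j)"
    and C: "\<And>i j. i \<le> 2 \<Longrightarrow> j \<le> 2 \<Longrightarrow> (2*r + real (i + j) + 1) * C i j = (2*r + real (i + j)) * c (i + j)"
    and M0: "(4*r - 1) * M 0 0 = r\<^sup>2 * c 0"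
    and M: "\<And>i j. i \<le> 2 \<Longrightarrow> j \<le> 2 \<Longrightarrow> 0 < i + j \<Longrightarrow>
      (2*r + real (i + j)) * M i j = 2 * (r + real i) * (r + real j) * c (i + j - 1)"
  shows "gram_denom r * (\<Sum>i\<le>2. \<Sum>j\<le>2. trial_coeff r b i * trial_coeff r b j * S i j) = 16 * c 0 * norm_poly r b"
    and "gram_denom r * (\<Sum>i\<le>2. \<Sum>j\<le>2. trial_coeff r b i * trial_coeff r b j * C i j) = 16 * c 0 * corr_poly r b"
    and "gram_denom r * (\<Sum>i\<le>2. \<Sum>j\<le>2. trial_coeff r b i * trial_coeff r b j * M i j) = 16 * c 0 * moment_poly r b"
proof -
  have coeff: "trial_coeff r b 0 = 64 + 64*b + 16*r" "trial_coeff r b 1 = - 16*b - 8*r" "trial_coeff r b 2 = r"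
    by (simp_all add: trial_coeff_def)
  have ch: "(2*r + 1) * c 1 = 2 * (4*r + 1) * c 0" "(2*r + 2) * c 2 = 2 * (4*r + 3) * c 1"
    "(2*r + 3) * c 3 = 2 * (4*r + 5) * c 2" "(2*r + 4) * c 4 = 2 * (4*r + 7) * c 3"
    using chain[of 0] chain[of 1] chain[of 2] chain[of 3] by (simp_all add: eval_nat_numeral algebra_simps)
  have s: "S 0 0 = c 0" "S 0 1 = c 1" "S 0 2 = c 2" "S 1 0 = c 1" "S 1 1 = c 2" "S 1 2 = c 3"
    "S 2 0 = c 2" "S 2 1 = c 3" "S 2 2 = c 4"
    using S by (simp_all add: eval_nat_numeral)
  have c: "(2*r + 1) * C 0 0 = 2*r * c 0" "(2*r + 2) * C 0 1 = (2*r + 1) * c 1" "(2*r + 3) * C 0 2 = (2*r + 2) * c 2"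
    "(2*r + 2) * C 1 0 = (2*r + 1) * c 1" "(2*r + 3) * C 1 1 = (2*r + 2) * c 2" "(2*r + 4) * C 1 2 = (2*r + 3) * c 3"
    "(2*r + 3) * C 2 0 = (2*r + 2) * c 2" "(2*r + 4) * C 2 1 = (2*r + 3) * c 3" "(2*r + 5) * C 2 2 = (2*r + 4) * c 4"
    using C[of 0 0] C[of 0 1] C[of 0 2] C[of 1 0] C[of 1 1] C[of 1 2] C[of 2 0] C[of 2 1] C[of 2 2]
    by (simp_all add: eval_nat_numeral algebra_simps)
  have m: "(2*r + 1) * M 0 1 = 2 * r * (r + 1) * c 0" "(2*r + 2) * M 0 2 = 2 * r * (r + 2) * c 1"
    "(2*r + 1) * M 1 0 = 2 * (r + 1) * r * c 0" "(2*r + 2) * M 1 1 = 2 * (r + 1) * (r + 1) * c 1"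
    "(2*r + 3) * M 1 2 = 2 * (r + 1) * (r + 2) * c 2" "(2*r + 2) * M 2 0 = 2 * (r + 2) * r * c 1"
    "(2*r + 3) * M 2 1 = 2 * (r + 2) * (r + 1) * c 2" "(2*r + 4) * M 2 2 = 2 * (r + 2) * (r + 2) * c 3"
    using M[of 0 1] M[of 0 2] M[of 1 0] M[of 1 1] M[of 1 2] M[of 2 0] M[of 2 1] M[of 2 2]
    by (simp_all add: eval_nat_numeral algebra_simps)
  show "gram_denom r * (\<Sum>i\<le>2. \<Sum>j\<le>2. trial_coeff r b i * trial_coeff r b j * S i j) = 16 * c 0 * norm_poly r b"
    using ch unfolding sum_atMost_2_2 coeff s gram_denom_def norm_poly_def by algebra
  show "gram_denom r * (\<Sum>i\<le>2. \<Sum>j\<le>2. trial_coeff r b i * trial_coeff r b j * C i j) = 16 * c 0 * corr_poly r b"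
    using ch c unfolding sum_atMost_2_2 coeff gram_denom_def corr_poly_def by algebra
  show "gram_denom r * (\<Sum>i\<le>2. \<Sum>j\<le>2. trial_coeff r b i * trial_coeff r b j * M i j) = 16 * c 0 * moment_poly r b"
    using ch M0 m unfolding sum_atMost_2_2 coeff gram_denom_def moment_poly_def by algebra
qed

definition trial_seq :: "nat \<Rightarrow> real \<Rightarrow> int \<Rightarrow> real" where
  "trial_seq n b k = (\<Sum>i\<le>2. trial_coeff (real n) b i * cbinom (n + i) k)"

lemma trial_seq_eq_0: "k \<notin> {-(int n + 2)..int n + 2} \<Longrightarrow> trial_seq n b k = 0"
  by (auto simp: trial_seq_def intro!: sum.neutral cbinom_eq_0)

definition cbinom_gram :: "(int \<Rightarrow> real) \<Rightarrow> int \<Rightarrow> int \<Rightarrow> nat \<Rightarrow> nat \<Rightarrow> real" where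
  "cbinom_gram w e K m l = (\<Sum>k\<in>{-K..K}. w k * (cbinom m k * cbinom l (k + e)))"

lemma cbinom_gram_window:
  assumes "1 \<le> n"
  defines "K \<equiv> int n + 2"
  shows "i \<le> 2 \<Longrightarrow> cbinom_gram (\<lambda>_. 1) 0 K (n + i) (n + j) = central_binom (2*n + (i + j))"
    and "i \<le> 2 \<Longrightarrow> (2 * real n + real (i + j) + 1) * cbinom_gram (\<lambda>_. 1) 1 K (n + i) (n + j)
      = (2 * real n + real (i + j)) * central_binom (2*n + (i + j))"
    and "i \<le> 2 \<Longrightarrow> 0 < i + j \<Longrightarrow> (2 * real n + real (i + j)) * cbinom_gram (\<lambda>k. (of_int k)\<^sup>2) 0 K (n + i) (n + j)
      = 2 * (real n + real i) * (real n + real j) * central_binom (2*n + (i + j) - 1)"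
    and "(4 * real n - 1) * cbinom_gram (\<lambda>k. (of_int k)\<^sup>2) 0 K n n = (real n)\<^sup>2 * central_binom (2*n)"
proof -
  have index: "n + i + (n + j) = 2*n + (i + j)"
    by simp
  show "cbinom_gram (\<lambda>_. 1) 0 K (n + i) (n + j) = central_binom (2*n + (i + j))" if "i \<le> 2"
    using cbinom_inner[of "n + i" K "n + j"] that by (simp add: cbinom_gram_def K_def index)
  show "(2 * real n + real (i + j) + 1) * cbinom_gram (\<lambda>_. 1) 1 K (n + i) (n + j)
      = (2 * real n + real (i + j)) * central_binom (2*n + (i + j))" if "i \<le> 2"
    using cbinom_inner_shift[of "n + i" K "n + j"] that by (simp add: cbinom_gram_def K_def index)
  show "(2 * real n + real (i + j)) * cbinom_gram (\<lambda>k. (of_int k)\<^sup>2) 0 K (n + i) (n + j)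
      = 2 * (real n + real i) * (real n + real j) * central_binom (2*n + (i + j) - 1)" if "i \<le> 2" "0 < i + j"
    using cbinom_moment[of "n + i" "n + j" K] assms that by (simp add: cbinom_gram_def K_def index)
  show "(4 * real n - 1) * cbinom_gram (\<lambda>k. (of_int k)\<^sup>2) 0 K n n = (real n)\<^sup>2 * central_binom (2*n)"
    using cbinom_moment_central[of n n K] assms
    by (simp add: cbinom_gram_def K_def power2_eq_square flip: mult_2)
qed

lemma trial_seq_sums:
  assumes "1 \<le> n"
  defines "K \<equiv> int n + 2"
  shows "gram_denom n * (\<Sum>k\<in>{-K..K}. (trial_seq n b k)\<^sup>2) = 16 * central_binom (2*n) * norm_poly n b"
    and "gram_denom n * (\<Sum>k\<in>{-K..K}. trial_seq n b k * trial_seq n b (k + 1))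
      = 16 * central_binom (2*n) * corr_poly n b"
    and "gram_denom n * (\<Sum>k\<in>{-K..K}. (of_int k)\<^sup>2 * (trial_seq n b k)\<^sup>2)
      = 16 * central_binom (2*n) * moment_poly n b"
proof -
  define c where "c d = central_binom (2*n + d)" for d
  define G where "G w e i j = cbinom_gram w e K (n + i) (n + j)" for w e i j
  note gram = cbinom_gram_window[OF assms(1), folded K_def]
  have expand: "(\<Sum>k\<in>{-K..K}. w k * (trial_seq n b k * trial_seq n b (k + e)))
      = (\<Sum>i\<le>2. \<Sum>j\<le>2. trial_coeff n b i * trial_coeff n b j * G w e i j)" for w e
    unfolding trial_seq_def G_def cbinom_gram_def by (rule sum_mult_sum_expand)
  have chain: "(2 * real n + real d + 1) * c (d + 1) = 2 * (4 * real n + 2 * real d + 1) * c d"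
    if "d < 4" for d
    using central_binom_Suc[of "2*n + d"] by (simp add: c_def algebra_simps)
  have S: "G (\<lambda>_. 1) 0 i j = c (i + j)" if "i \<le> 2" "j \<le> 2" for i j
    using gram(1)[OF that(1)] by (simp add: G_def c_def)
  have C: "(2 * real n + real (i + j) + 1) * G (\<lambda>_. 1) 1 i j = (2 * real n + real (i + j)) * c (i + j)"
    if "i \<le> 2" "j \<le> 2" for i j
    using gram(2)[OF that(1)] by (simp add: G_def c_def)
  have M0: "(4 * real n - 1) * G (\<lambda>k. (of_int k)\<^sup>2) 0 0 0 = (real n)\<^sup>2 * c 0"
    using gram(4) by (simp add: G_def c_def)
  have M: "(2 * real n + real (i + j)) * G (\<lambda>k. (of_int k)\<^sup>2) 0 i j
      = 2 * (real n + real i) * (real n + real j) * c (i + j - 1)" if "i \<le> 2" "j \<le> 2" "0 < i + j" for i j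
  proof -
    have "2*n + (i + j - 1) = 2*n + (i + j) - 1"
      using that by arith
    then show ?thesis
      unfolding c_def using gram(3)[OF that(1,3)] by (simp add: G_def)
  qed
  note identities = trial_gram_identities[OF chain S C M0 M, of b, unfolded c_def, simplified]
  show "gram_denom n * (\<Sum>k\<in>{-K..K}. (trial_seq n b k)\<^sup>2) = 16 * central_binom (2*n) * norm_poly n b"
    using expand[of "\<lambda>_. 1" 0] identities(1) by (simp add: power2_eq_square)
  show "gram_denom n * (\<Sum>k\<in>{-K..K}. trial_seq n b k * trial_seq n b (k + 1))
      = 16 * central_binom (2*n) * corr_poly n b"
    using expand[of "\<lambda>_. 1" 1] identities(2) by simp
  show "gram_denom n * (\<Sum>k\<in>{-K..K}. (of_int k)\<^sup>2 * (trial_seq n b k)\<^sup>2)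
      = 16 * central_binom (2*n) * moment_poly n b"
    using expand[of "\<lambda>k. (of_int k)\<^sup>2" 0] identities(3) by (simp add: power2_eq_square)
qed

lemma admissible_normalize:
  fixes x :: "int \<Rightarrow> real"
  assumes S: "((\<lambda>k. (x k)\<^sup>2) has_sum S) UNIV"
    and C: "((\<lambda>k. x k * x (k + 1)) has_sum C) UNIV"
    and M: "((\<lambda>k. (of_int k)\<^sup>2 * (x k)\<^sup>2) has_sum M) UNIV"
    and "0 < S" and "C / S = 1 / sqrt (1 + s)"
  shows "admissible s (\<lambda>k. x k / sqrt S)"
    and "time_spread (\<lambda>k. x k / sqrt S) = M / S"
proof -
  have sq: "(a / sqrt S) * (b / sqrt S) = a * b / S" for a b
    using \<open>0 < S\<close> by (simp add: field_simps)
  have sq2: "(a / sqrt S)\<^sup>2 = a\<^sup>2 / S" for a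
    using \<open>0 < S\<close> by (simp add: power_divide)
  have "((\<lambda>k. (x k / sqrt S)\<^sup>2) has_sum S / S) UNIV"
    using has_sum_cmult_right[OF S, of "1 / S"] by (simp add: sq2)
  moreover have "((\<lambda>k. x k / sqrt S * (x (k + 1) / sqrt S)) has_sum C / S) UNIV"
    using has_sum_cmult_right[OF C, of "1 / S"] \<open>0 < S\<close> by (simp add: sq)
  moreover have M': "((\<lambda>k. (of_int k)\<^sup>2 * (x k / sqrt S)\<^sup>2) has_sum M / S) UNIV"
    using has_sum_cmult_right[OF M, of "1 / S"] by (simp add: sq2)
  ultimately show "admissible s (\<lambda>k. x k / sqrt S)"
    using assms(4,5) unfolding admissible_def by (auto dest: has_sum_imp_summable)
  show "time_spread (\<lambda>k. x k / sqrt S) = M / S"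
    unfolding time_spread_def using M' by (rule infsumI)
qed

lemma admissible_normalize_finite:
  fixes x :: "int \<Rightarrow> real"
  assumes "\<And>k. k \<notin> {-K..K} \<Longrightarrow> x k = 0"
    and "0 < (\<Sum>k\<in>{-K..K}. (x k)\<^sup>2)"
    and "(\<Sum>k\<in>{-K..K}. x k * x (k + 1)) / (\<Sum>k\<in>{-K..K}. (x k)\<^sup>2) = 1 / sqrt (1 + s)"
  defines "y \<equiv> \<lambda>k. x k / sqrt (\<Sum>k\<in>{-K..K}. (x k)\<^sup>2)"
  shows "admissible s y"
    and "time_spread y = (\<Sum>k\<in>{-K..K}. (of_int k)\<^sup>2 * (x k)\<^sup>2) / (\<Sum>k\<in>{-K..K}. (x k)\<^sup>2)"
proof -
  have fin: "(f has_sum (\<Sum>k\<in>{-K..K}. f k)) UNIV" if "\<And>k. k \<notin> {-K..K} \<Longrightarrow> f k = 0" for f :: "int \<Rightarrow> real"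
    by (rule has_sum_finite_neutralI) (use that in auto)
  note normalize = admissible_normalize[OF fin fin fin, OF _ _ _ assms(2,3)]
  show "admissible s y" "time_spread y = (\<Sum>k\<in>{-K..K}. (of_int k)\<^sup>2 * (x k)\<^sup>2) / (\<Sum>k\<in>{-K..K}. (x k)\<^sup>2)"
    unfolding y_def by (rule normalize; simp add: assms(1))+
qed

lemma time_spread_nonneg: "0 \<le> time_spread x"
  unfolding time_spread_def by (rule infsum_nonneg) simp

lemma V_le_time_spread: "admissible s x \<Longrightarrow> V s \<le> time_spread x"
  unfolding V_def by (rule cInf_lower) (auto intro: bdd_belowI[where m = 0] simp: time_spread_nonneg)

definition plateau :: "int \<Rightarrow> real \<Rightarrow> int \<Rightarrow> real" where
  "plateau m u k = (if k = 0 then 1 else if 0 < k \<and> k < m then u else 0)"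

lemma plateau_sums:
  assumes "2 \<le> m"
  shows "(\<Sum>k\<in>{-m..m}. (plateau m u k)\<^sup>2) = 1 + of_int (m - 1) * u\<^sup>2"
    and "(\<Sum>k\<in>{-m..m}. plateau m u k * plateau m u (k + 1)) = u + of_int (m - 2) * u\<^sup>2"
proof -
  have "(\<Sum>k\<in>{-m..m}. (plateau m u k)\<^sup>2)
      = (\<Sum>k\<in>{-m..m}. (if k = 0 then 1 else 0) + (if 0 < k \<and> k < m then u\<^sup>2 else 0))"
    by (rule sum.cong) (auto simp: plateau_def)
  also have "\<dots> = 1 + (\<Sum>k\<in>{k\<in>{-m..m}. 0 < k \<and> k < m}. u\<^sup>2)"
    using assms by (simp add: sum.distrib sum.inter_filter[symmetric])
  also have "{k\<in>{-m..m}. 0 < k \<and> k < m} = {1..m - 1}"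
    by auto
  finally show "(\<Sum>k\<in>{-m..m}. (plateau m u k)\<^sup>2) = 1 + of_int (m - 1) * u\<^sup>2"
    using assms by simp
  have "(\<Sum>k\<in>{-m..m}. plateau m u k * plateau m u (k + 1))
      = (\<Sum>k\<in>{-m..m}. (if k = 0 then u else 0) + (if 0 < k \<and> k < m - 1 then u\<^sup>2 else 0))"
    by (rule sum.cong) (use assms in \<open>auto simp: plateau_def power2_eq_square\<close>)
  also have "\<dots> = u + (\<Sum>k\<in>{k\<in>{-m..m}. 0 < k \<and> k < m - 1}. u\<^sup>2)"
    using assms by (simp add: sum.distrib sum.inter_filter[symmetric])
  also have "{k\<in>{-m..m}. 0 < k \<and> k < m - 1} = {1..m - 2}"
    by auto
  finally show "(\<Sum>k\<in>{-m..m}. plateau m u k * plateau m u (k + 1)) = u + of_int (m - 2) * u\<^sup>2"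
    using assms by simp
qed

lemma admissible_exists:
  assumes "0 < s"
  shows "\<exists>x. admissible s x"
proof -
  define tau where "tau = 1 / sqrt (1 + s)"
  have "0 < tau" "tau < 1"
    using assms by (auto simp: tau_def)
  define m where "m = \<lceil>1 / (1 - tau)\<rceil> + 1"
  have "1 \<le> 1 / (1 - tau)"
    using \<open>0 < tau\<close> \<open>tau < 1\<close> by simp
  then have "2 \<le> m" "1 / (1 - tau) \<le> of_int m"
    unfolding m_def by linarith+
  define f where "f u = (u + of_int (m - 2) * u\<^sup>2) / (1 + of_int (m - 1) * u\<^sup>2)" for u :: real
  have denom_pos: "0 < 1 + of_int (m - 1) * u\<^sup>2" for u :: real
    using \<open>2 \<le> m\<close> by (simp add: add_pos_nonneg)
  have "f 0 \<le> tau"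
    using \<open>0 < tau\<close> by (simp add: f_def)
  moreover have "tau \<le> f 1"
  proof -
    have "f 1 = (of_int m - 1) / of_int m"
      unfolding f_def using \<open>2 \<le> m\<close> by (simp add: field_simps)
    moreover have "1 \<le> of_int m * (1 - tau)"
      using \<open>1 / (1 - tau) \<le> of_int m\<close> \<open>tau < 1\<close> by (simp add: field_simps)
    then have "tau \<le> (of_int m - 1) / of_int m"
      using \<open>2 \<le> m\<close> by (simp add: field_simps)
    ultimately show ?thesis
      by simp
  qed
  moreover have "continuous_on {0..1} f"
    unfolding f_def using denom_pos by (intro continuous_intros) (auto simp: less_imp_neq[symmetric])
  ultimately obtain u where "f u = tau"
    using IVT'[of f 0 tau 1] by auto
  have "plateau m u k = 0" if "k \<notin> {-m..m}" for k
    using that \<open>2 \<le> m\<close> by (auto simp: plateau_def)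
  then have "admissible s (\<lambda>k. plateau m u k / sqrt (\<Sum>k\<in>{-m..m}. (plateau m u k)\<^sup>2))"
    by (rule admissible_normalize_finite)
       (use \<open>f u = tau\<close> denom_pos in \<open>simp_all add: plateau_sums[OF \<open>2 \<le> m\<close>] f_def tau_def\<close>)
  then show ?thesis
    by blast
qed

section \<open>The lower bound\<close>

lemma has_sum_delta: "((\<lambda>k::int. if k = 0 then c else 0) has_sum (c::real)) UNIV"
  by (rule has_sum_finite_neutralI[where B = "{0}"]) auto

lemma has_sum_int_shift: "(f has_sum a) UNIV \<Longrightarrow> ((\<lambda>k::int. f (k + 1)) has_sum a) UNIV"
  using has_sum_reindex_bij_witness[of UNIV "\<lambda>k. k + 1" "\<lambda>k. k - 1" UNIV "\<lambda>k. f (k + 1)" f a a] by simp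

lemma mult_le_weighted_squares:
  fixes t u v :: real
  assumes "0 < t"
  shows "u * v \<le> t / 2 * u\<^sup>2 + 1 / (2 * t) * v\<^sup>2"
proof -
  have "0 \<le> (t * u - v)\<^sup>2 / t"
    using assms by simp
  also have "\<dots> = 2 * (t / 2 * u\<^sup>2 + 1 / (2 * t) * v\<^sup>2 - u * v)"
    using assms by (simp add: field_simps power2_eq_square)
  finally show ?thesis by simp
qed

lemma admissible_corr_le:
  assumes adm: "admissible s x" and "0 < t"
  shows "1 / sqrt (1 + s) \<le> (t / 2 + 1 / (2 * t)) * (1 - (x 0)\<^sup>2) + t * (x 0)\<^sup>2"
proof -
  have norm: "((\<lambda>k. (x k)\<^sup>2) has_sum 1) UNIV"
    and corr: "((\<lambda>k. x k * x (k + 1)) has_sum (1 / sqrt (1 + s))) UNIV"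
    using adm unfolding admissible_def by auto
  define R where "R = t / 2 + 1 / (2 * t)"
  define g where "g k = (if 0 \<le> k then t / 2 else 1 / (2 * t))" for k :: int
  have "0 < t / 2" "0 < 1 / (2 * t)"
    using \<open>0 < t\<close> by simp_all
  then have g_pos: "0 \<le> g k" and g_le: "g k \<le> R" for k
    unfolding R_def g_def by auto
  have weights: "g k + g (- k) = R + (if k = 0 then t - R else 0)" for k
    by (auto simp: g_def R_def)
  have summable: "(\<lambda>k. g (h k) * (x k)\<^sup>2) summable_on UNIV" for h :: "int \<Rightarrow> int"
    by (rule summable_on_comparison_test[OF summable_on_cmult_right[OF has_sum_imp_summable[OF norm], of R]])
       (auto simp: abs_mult g_pos intro!: mult_right_mono g_le)
  define A B where "A = (\<Sum>\<^sub>\<infinity>k. g k * (x k)\<^sup>2)" and "B = (\<Sum>\<^sub>\<infinity>k. g (- k) * (x k)\<^sup>2)"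
  have A: "((\<lambda>k. g k * (x k)\<^sup>2) has_sum A) UNIV" and B: "((\<lambda>k. g (- k) * (x k)\<^sup>2) has_sum B) UNIV"
    using summable[of id] summable[of uminus] by (simp_all add: A_def B_def)
  have B_shift: "((\<lambda>k. g (- (k + 1)) * (x (k + 1))\<^sup>2) has_sum B) UNIV"
    using has_sum_int_shift[OF B] .
  have "g k * (x k)\<^sup>2 + g (- k) * (x k)\<^sup>2 = R * (x k)\<^sup>2 + (if k = 0 then (t - R) * (x 0)\<^sup>2 else 0)" for k
    by (simp add: distrib_right[symmetric] weights)
  then have "((\<lambda>k. g k * (x k)\<^sup>2 + g (- k) * (x k)\<^sup>2) has_sum R * 1 + (t - R) * (x 0)\<^sup>2) UNIV"
    using has_sum_add[OF has_sum_cmult_right[OF norm, of R] has_sum_delta[of "(t - R) * (x 0)\<^sup>2"]]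
    by simp
  then have "A + B = R * 1 + (t - R) * (x 0)\<^sup>2"
    using has_sum_add[OF A B] by (rule has_sum_unique[rotated])
  moreover have "1 / sqrt (1 + s) \<le> A + B"
  proof (rule has_sum_mono[OF corr has_sum_add[OF A B_shift]])
    fix k :: int
    show "x k * x (k + 1) \<le> g k * (x k)\<^sup>2 + g (- (k + 1)) * (x (k + 1))\<^sup>2"
    proof (cases "0 \<le> k")
      case True
      then show ?thesis
        using mult_le_weighted_squares[OF \<open>0 < t\<close>, of "x k" "x (k + 1)"] by (simp add: g_def)
    next
      case False
      then show ?thesis
        using mult_le_weighted_squares[OF \<open>0 < t\<close>, of "x (k + 1)" "x k"] by (simp add: g_def ac_simps)
    qed
  qed
  ultimately show ?thesis
    by (simp add: R_def algebra_simps)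
qed

lemma admissible_center_bound:
  assumes "0 < s" and adm: "admissible s x"
  shows "(x 0)\<^sup>2 \<le> sqrt (s / (1 + s))"
proof -
  define R q where "R = sqrt (1 + s)" and "q = sqrt s"
  have "0 < q" "q < R" "R * R = 1 + s" "q * q = s"
    using \<open>0 < s\<close> by (auto simp: R_def q_def real_sqrt_less_iff)
  then have "(R - q) * (R + q) = 1"
    by (simp add: algebra_simps)
  then have "(R - q) / 2 + 1 / (2 * (R - q)) = R"
    using \<open>q < R\<close> by (simp add: field_simps)
  then have "1 / R \<le> R - q * (x 0)\<^sup>2"
    using admissible_corr_le[OF adm, of "R - q"] \<open>q < R\<close> by (simp add: R_def algebra_simps)
  then have "q * (R * (x 0)\<^sup>2) \<le> q * q"
    using \<open>0 < q\<close> \<open>q < R\<close> \<open>R * R = 1 + s\<close> \<open>q * q = s\<close> by (simp add: field_simps)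
  then have "(x 0)\<^sup>2 \<le> q / R"
    using \<open>0 < q\<close> \<open>q < R\<close> by (simp add: field_simps)
  also have "q / R = sqrt (s / (1 + s))"
    by (simp add: q_def R_def real_sqrt_divide)
  finally show ?thesis .
qed

lemma admissible_off_center_bound:
  assumes "admissible s x"
  shows "1 - (x 0)\<^sup>2 \<le> time_spread x"
proof -
  have norm: "((\<lambda>k. (x k)\<^sup>2) has_sum 1) UNIV"
    and spread: "((\<lambda>k. (of_int k)\<^sup>2 * (x k)\<^sup>2) has_sum time_spread x) UNIV"
    using assms unfolding admissible_def time_spread_def by auto
  have "(x k)\<^sup>2 + (if k = 0 then - (x 0)\<^sup>2 else 0) \<le> (of_int k)\<^sup>2 * (x k)\<^sup>2" for k
  proof (cases "k = 0")
    case False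
    then have "1 \<le> \<bar>of_int k :: real\<bar>"
      by linarith
    then have "1 \<le> (of_int k :: real)\<^sup>2"
      using one_le_power[of "\<bar>of_int k :: real\<bar>" 2] by simp
    then show ?thesis
      using False mult_right_mono[of 1 "(of_int k)\<^sup>2" "(x k)\<^sup>2"] by simp
  qed simp
  then have "1 + - (x 0)\<^sup>2 \<le> time_spread x"
    by (rule has_sum_mono[OF has_sum_add[OF norm has_sum_delta] spread])
  then show ?thesis
    by simp
qed

lemma V_lower_bound:
  assumes "0 < s"
  shows "1 - sqrt (s / (1 + s)) \<le> V s"
  unfolding V_def
proof (rule cInf_greatest)
  show "{time_spread x |x. admissible s x} \<noteq> {}"
    using admissible_exists[OF assms] by auto
  show "1 - sqrt (s / (1 + s)) \<le> y" if "y \<in> {time_spread x |x. admissible s x}" for y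
    using that admissible_center_bound[OF assms] admissible_off_center_bound by fastforce
qed

section \<open>Positivity certificates\<close>

text \<open>In \<open>m = r - 20 \<ge> 0\<close> and \<open>t = -5b/6 \<in> [0, 1]\<close> each polynomial below is a combination of
  products of powers of \<open>m\<close>, \<open>t\<close> and \<open>1 - t\<close> with positive coefficients.\<close>

lemma norm_poly_pos:
  assumes "20 \<le> r" "- (6/5) \<le> b" "b \<le> 0"
  shows "0 < norm_poly r b"
proof -
  define m t where "m = r - 20" and "t = - (5/6) * b"
  have r_eq: "r = 20 + m" and b_eq: "b = - (6/5) * t" and "0 \<le> m" "0 \<le> t" "0 \<le> 1 - t"
    using assms by (simp_all add: m_def t_def)
  have "25 * norm_poly r b = 146714208962400*t*(1-t) + 21087917803800*m*(1-t)^2 + 41662429925040*m*t*(1-t) + 20583207873432*m*t^2 + 2487742993075*m^2*(1-t)^2 + 4927416319910*m^2*t*(1-t) + 2440282744051*m^2*t^2 + 156462290450*m^3*(1-t)^2 + 310675510180*m^3*t*(1-t) + 154232186258*m^3*t^2 + 5533134600*m^4*(1-t)^2 + 11013684240*m^4*t*(1-t) + 5480770824*m^4*t^2 + 104320000*m^5*(1-t)^2 + 208148480*m^5*t*(1-t) + 103828480*m^5*t^2 + 819200*m^6*(1-t)^2 + 1638400*m^6*t*(1-t) + 819200*m^6*t^2 + 74453145678000*(1-t)^2 + 72307553811120*t^2"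
    unfolding r_eq b_eq norm_poly_def by algebra
  moreover have "0 \<le> 146714208962400*t*(1-t) + 21087917803800*m*(1-t)^2 + 41662429925040*m*t*(1-t) + 20583207873432*m*t^2 + 2487742993075*m^2*(1-t)^2 + 4927416319910*m^2*t*(1-t) + 2440282744051*m^2*t^2 + 156462290450*m^3*(1-t)^2 + 310675510180*m^3*t*(1-t) + 154232186258*m^3*t^2 + 5533134600*m^4*(1-t)^2 + 11013684240*m^4*t*(1-t) + 5480770824*m^4*t^2 + 104320000*m^5*(1-t)^2 + 208148480*m^5*t*(1-t) + 103828480*m^5*t^2 + 819200*m^6*(1-t)^2 + 1638400*m^6*t*(1-t) + 819200*m^6*t^2"
    using \<open>0 \<le> m\<close> \<open>0 \<le> t\<close> \<open>0 \<le> 1 - t\<close> by (intro add_nonneg_nonneg mult_nonneg_nonneg zero_le_power; simp)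
  moreover have "0 < (1 - t)\<^sup>2 + t\<^sup>2"
    by (cases "t = 0") (simp_all add: add_nonneg_pos)
  ultimately show ?thesis
    using zero_le_power2[of "1 - t"] by linarith
qed

lemma trial_quality:
  assumes "20 \<le> r" "- (6/5) \<le> b" "b \<le> 0"
  shows "(norm_poly r b - corr_poly r b) * (norm_poly r b + 16 * moment_poly r b) \<le> 2 * (norm_poly r b)\<^sup>2"
proof -
  define m t where "m = r - 20" and "t = - (5/6) * b"
  have r_eq: "r = 20 + m" and b_eq: "b = - (6/5) * t" and "0 \<le> m" "0 \<le> t" "0 \<le> 1 - t"
    using assms by (simp_all add: m_def t_def)
  have "625 * (2 * (norm_poly r b)\<^sup>2 - (norm_poly r b - corr_poly r b) * (norm_poly r b + 16 * moment_poly r b))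
      = 717216632539080084000000*(1-t)^4 + 3054398529440735740800000*t*(1-t)^3 + 4534064780854616763840000*t^2*(1-t)^2 + 2950604270140579019136000*t^3*(1-t) + 708266464766993994220800*t^4 + 347486391761921992800000*m*(1-t)^4 + 1454195595029182868160000*m*t*(1-t)^3 + 2154841408121182760448000*m*t^2*(1-t)^2 + 1403440045528037105779200*m*t^3*(1-t) + 338274116336316639893760*m*t^4 + 75416266436781100140000*m^2*(1-t)^4 + 311024745537598600128000*m^2*t*(1-t)^3 + 460326317546665038110400*m^2*t^2*(1-t)^2 + 300149232974658892604160*m^2*t^3*(1-t) + 72639711462747822154848*m^2*t^4 + 9656929945537234770000*m^3*(1-t)^4 + 39351335628259835652000*m^3*t*(1-t)^3 + 58205250902601489542400*m^3*t^2*(1-t)^2 + 38007440941681680958560*m^3*t^3*(1-t) + 9235237734594858706608*m^3*t^4 + 808002946238709848125*m^4*(1-t)^4 + 3261368655766662392500*m^4*t*(1-t)^3 + 4823863319704761509550*m^4*t^2*(1-t)^2 + 3155614786991697735220*m^4*t^3*(1-t) + 769829617470742157821*m^4*t^4 + 46161361028633408750*m^5*(1-t)^4 + 184993578395357507000*m^5*t*(1-t)^3 + 273787551572756855700*m^5*t^2*(1-t)^2 + 179489448968467415480*m^5*t^3*(1-t) + 43962011153519197934*m^5*t^4 + 1823591038430555000*m^6*(1-t)^4 + 7272543660269036000*m^6*t*(1-t)^3 + 10776702549333205200*m^6*t^2*(1-t)^2 + 7082853998208666080*m^6*t^3*(1-t) + 1741727435193261944*m^6*t^4 + 49185954944960000*m^7*(1-t)^4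 + 195637433358080000*m^7*t*(1-t)^3 + 290461167049958400*m^7*t^2*(1-t)^2 + 191459504517109760*m^7*t^3*(1-t) + 47271151414773248*m^7*t^4 + 866761349120000*m^8*(1-t)^4 + 3446126698496000*m^8*t*(1-t)^3 + 5129964038553600*m^8*t^2*(1-t)^2 + 3392724599767040*m^8*t^3*(1-t) + 841082233536512*m^8*t^4 + 9009889280000*m^9*(1-t)^4 + 35888562176000*m^9*t*(1-t)^3 + 53606350848000*m^9*t^2*(1-t)^2 + 35586572288000*m^9*t^3*(1-t) + 8858894336000*m^9*t^4 + 41943040000*m^10*(1-t)^4 + 167772160000*m^10*t*(1-t)^3 + 251658240000*m^10*t^2*(1-t)^2 + 167772160000*m^10*t^3*(1-t) + 41943040000*m^10*t^4"
    unfolding r_eq b_eq norm_poly_def corr_poly_def moment_poly_def by algebra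
  moreover have "0 \<le> 717216632539080084000000*(1-t)^4 + 3054398529440735740800000*t*(1-t)^3 + 4534064780854616763840000*t^2*(1-t)^2 + 2950604270140579019136000*t^3*(1-t) + 708266464766993994220800*t^4 + 347486391761921992800000*m*(1-t)^4 + 1454195595029182868160000*m*t*(1-t)^3 + 2154841408121182760448000*m*t^2*(1-t)^2 + 1403440045528037105779200*m*t^3*(1-t) + 338274116336316639893760*m*t^4 + 75416266436781100140000*m^2*(1-t)^4 + 311024745537598600128000*m^2*t*(1-t)^3 + 460326317546665038110400*m^2*t^2*(1-t)^2 + 300149232974658892604160*m^2*t^3*(1-t) + 72639711462747822154848*m^2*t^4 + 9656929945537234770000*m^3*(1-t)^4 + 39351335628259835652000*m^3*t*(1-t)^3 + 58205250902601489542400*m^3*t^2*(1-t)^2 + 38007440941681680958560*m^3*t^3*(1-t) + 9235237734594858706608*m^3*t^4 + 808002946238709848125*m^4*(1-t)^4 + 3261368655766662392500*m^4*t*(1-t)^3 + 4823863319704761509550*m^4*t^2*(1-t)^2 + 3155614786991697735220*m^4*t^3*(1-t) + 769829617470742157821*m^4*t^4 + 46161361028633408750*m^5*(1-t)^4 + 184993578395357507000*m^5*t*(1-t)^3 + 273787551572756855700*m^5*t^2*(1-t)^2 + 179489448968467415480*m^5*t^3*(1-t) + 43962011153519197934*m^5*t^4 + 1823591038430555000*m^6*(1-t)^4 + 7272543660269036000*m^6*t*(1-t)^3 + 10776702549333205200*m^6*t^2*(1-t)^2 + 7082853998208666080*m^6*t^3*(1-t) + 1741727435193261944*m^6*t^4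 + 49185954944960000*m^7*(1-t)^4 + 195637433358080000*m^7*t*(1-t)^3 + 290461167049958400*m^7*t^2*(1-t)^2 + 191459504517109760*m^7*t^3*(1-t) + 47271151414773248*m^7*t^4 + 866761349120000*m^8*(1-t)^4 + 3446126698496000*m^8*t*(1-t)^3 + 5129964038553600*m^8*t^2*(1-t)^2 + 3392724599767040*m^8*t^3*(1-t) + 841082233536512*m^8*t^4 + 9009889280000*m^9*(1-t)^4 + 35888562176000*m^9*t*(1-t)^3 + 53606350848000*m^9*t^2*(1-t)^2 + 35586572288000*m^9*t^3*(1-t) + 8858894336000*m^9*t^4 + 41943040000*m^10*(1-t)^4 + 167772160000*m^10*t*(1-t)^3 + 251658240000*m^10*t^2*(1-t)^2 + 167772160000*m^10*t^3*(1-t) + 41943040000*m^10*t^4"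
    using \<open>0 \<le> m\<close> \<open>0 \<le> t\<close> \<open>0 \<le> 1 - t\<close> by (intro add_nonneg_nonneg mult_nonneg_nonneg zero_le_power; simp)
  ultimately show ?thesis
    by simp
qed

lemma trial_corr_step_certificate:
  assumes "20 \<le> r"
  shows "corr_poly (r + 1) 0 * norm_poly r (- (6/5)) \<le> corr_poly r (- (6/5)) * norm_poly (r + 1) 0"
proof -
  define m where "m = r - 20"
  have r_eq: "r = 20 + m" and "0 \<le> m"
    using assms by (simp_all add: m_def)
  have "25 * (corr_poly r (- (6/5)) * norm_poly (r + 1) 0 - corr_poly (r + 1) 0 * norm_poly r (- (6/5)))
      = 60307170726864915122400 + 27900264683881096578000*m + 5807408000989232127606*m^2 + 716196058368998174012*m^3 + 57951810720989441510*m^4 + 3214829098151746224*m^5 + 123821164876883424*m^6 + 3269484408803328*m^7 + 56641184071680*m^8 + 581347311616*m^9 + 2684354560*m^10"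
    unfolding r_eq norm_poly_def corr_poly_def
    by (simp only: mult_zero_right mult_zero_left power_zero_numeral add_0_right add_0_left diff_zero) algebra
  moreover have "0 \<le> 60307170726864915122400 + 27900264683881096578000*m + 5807408000989232127606*m^2 + 716196058368998174012*m^3 + 57951810720989441510*m^4 + 3214829098151746224*m^5 + 123821164876883424*m^6 + 3269484408803328*m^7 + 56641184071680*m^8 + 581347311616*m^9 + 2684354560*m^10"
    using \<open>0 \<le> m\<close> by (intro add_nonneg_nonneg mult_nonneg_nonneg zero_le_power; simp)
  ultimately show ?thesis
    by simp
qed

lemma trial_corr_tail_certificate:
  assumes "20 \<le> r"
  shows "r * (norm_poly r 0 - corr_poly r 0) \<le> norm_poly r 0"
proof -
  define m where "m = r - 20"
  have r_eq: "r = 20 + m" and "0 \<le> m"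
    using assms by (simp_all add: m_def)
  have "norm_poly r 0 - r * (norm_poly r 0 - corr_poly r 0) = 1501124004720 + 424445113992*m + 49993481511*m^2 + 3139806995*m^3 + 110895620*m^4 + 2088448*m^5 + 16384*m^6"
    unfolding r_eq norm_poly_def corr_poly_def
    by (simp only: mult_zero_right mult_zero_left power_zero_numeral add_0_right add_0_left diff_zero) algebra
  moreover have "0 \<le> 1501124004720 + 424445113992*m + 49993481511*m^2 + 3139806995*m^3 + 110895620*m^4 + 2088448*m^5 + 16384*m^6"
    using \<open>0 \<le> m\<close> by (intro add_nonneg_nonneg mult_nonneg_nonneg zero_le_power; simp)
  ultimately show ?thesis
    by simp
qed

section \<open>The upper bound\<close>

definition trial_corr :: "real \<Rightarrow> real \<Rightarrow> real" where
  "trial_corr r b = corr_poly r b / norm_poly r b"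

lemma trial_corr_step:
  assumes "20 \<le> r"
  shows "trial_corr (r + 1) 0 \<le> trial_corr r (- (6/5))"
  using trial_corr_step_certificate[OF assms] norm_poly_pos[of r "- (6/5)"] norm_poly_pos[of "r + 1" 0] assms
  by (simp add: trial_corr_def divide_simps mult.commute)

lemma trial_corr_tail:
  assumes "20 \<le> r"
  shows "1 - 1 / r \<le> trial_corr r 0"
  using trial_corr_tail_certificate[OF assms] norm_poly_pos[of r 0] assms
  by (simp add: trial_corr_def field_simps)

lemma continuous_on_trial_corr:
  assumes "20 \<le> r"
  shows "continuous_on {- (6/5)..0} (trial_corr r)"
proof -
  have "norm_poly r b \<noteq> 0" if "b \<in> {- (6/5)..0}" for b
    using norm_poly_pos[of r b] assms that by simp
  then show ?thesis
    unfolding trial_corr_def norm_poly_def corr_poly_def by (intro continuous_intros) auto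
qed

text \<open>Take \<open>n\<close> maximal with \<open>trial_corr n 0 \<le> tau\<close> (\<open>trial_corr_tail\<close> bounds it); then
  \<open>trial_corr_step\<close> and the intermediate value theorem in \<open>b\<close> reach \<open>tau\<close>.\<close>

lemma trial_corr_attains:
  assumes "trial_corr 20 0 \<le> tau" "tau < 1"
  obtains n b where "20 \<le> n" "- (6/5) \<le> b" "b \<le> 0" "trial_corr (real n) b = tau"
proof -
  define A where "A = {n::nat. 20 \<le> n \<and> trial_corr n 0 \<le> tau}"
  have "A \<subseteq> {..nat \<lceil>1 / (1 - tau)\<rceil>}"
  proof
    fix n assume "n \<in> A"
    then have "20 \<le> n" "1 - 1 / real n \<le> tau"
      using trial_corr_tail[of n] by (auto simp: A_def)
    then have "real n \<le> 1 / (1 - tau)"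
      using \<open>tau < 1\<close> by (simp add: field_simps)
    then have "int n \<le> \<lceil>1 / (1 - tau)\<rceil>"
      by (metis ceiling_mono ceiling_of_nat)
    then show "n \<in> {..nat \<lceil>1 / (1 - tau)\<rceil>}"
      by (simp add: le_nat_iff)
  qed
  then have "finite A"
    using finite_subset by blast
  define n where "n = Max A"
  have "20 \<in> A"
    using assms by (simp add: A_def)
  then have "n \<in> A"
    unfolding n_def using \<open>finite A\<close> by (intro Max_in) auto
  moreover have "Suc n \<notin> A"
    unfolding n_def using \<open>finite A\<close> by (meson Max_ge Suc_n_not_le_n)
  ultimately have "20 \<le> n" "trial_corr n 0 \<le> tau" "tau < trial_corr (n + 1) 0"
    by (auto simp: A_def)
  moreover have "trial_corr (n + 1) 0 \<le> trial_corr n (- (6/5))"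
    using trial_corr_step[of n] \<open>20 \<le> n\<close> by (simp add: add.commute)
  ultimately obtain b where "- (6/5) \<le> b" "b \<le> 0" "trial_corr n b = tau"
    using IVT2'[of "trial_corr n" 0 tau "- (6/5)"] continuous_on_trial_corr[of n] by force
  then show ?thesis
    using that \<open>20 \<le> n\<close> by blast
qed

lemma trial_moment_ratio_bound:
  assumes "20 \<le> r" "- (6/5) \<le> b" "b \<le> 0" "trial_corr r b = tau" "tau < 1"
  shows "moment_poly r b / norm_poly r b \<le> 1/8 * (1 / (1 - tau) - 1/2)"
proof -
  define S C M where "S = norm_poly r b" and "C = corr_poly r b" and "M = moment_poly r b"
  have "0 < S"
    unfolding S_def using norm_poly_pos assms(1-3) .
  then have "C = tau * S"
    using assms(4) by (simp add: S_def C_def trial_corr_def field_simps)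
  have "(S - C) * (S + 16 * M) \<le> 2 * S\<^sup>2"
    unfolding S_def C_def M_def using trial_quality assms(1-3) .
  then have "S * ((1 - tau) * (S + 16 * M)) \<le> S * (2 * S)"
    unfolding \<open>C = tau * S\<close> by (simp add: algebra_simps power2_eq_square)
  then have "(1 - tau) * (S + 16 * M) \<le> 2 * S"
    using \<open>0 < S\<close> by (simp add: mult_le_cancel_left_pos)
  then show ?thesis
    using \<open>0 < S\<close> \<open>tau < 1\<close> by (simp add: S_def M_def field_simps)
qed

lemma trial_seq_admissible:
  assumes "20 \<le> n" "- (6/5) \<le> b" "b \<le> 0" "trial_corr (real n) b = 1 / sqrt (1 + s)"
  obtains x where "admissible s x" "time_spread x = moment_poly n b / norm_poly n b"
proof -
  define K where "K = int n + 2"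
  define S C M where "S = (\<Sum>k\<in>{-K..K}. (trial_seq n b k)\<^sup>2)"
    and "C = (\<Sum>k\<in>{-K..K}. trial_seq n b k * trial_seq n b (k + 1))"
    and "M = (\<Sum>k\<in>{-K..K}. (of_int k)\<^sup>2 * (trial_seq n b k)\<^sup>2)"
  have "1 \<le> n" "1 \<le> real n"
    using assms(1) by simp_all
  then have "0 < gram_denom n" "0 < central_binom (2*n)" "0 < norm_poly n b"
    using central_binom_pos norm_poly_pos[of n b] assms by (simp_all add: gram_denom_def)
  moreover have "gram_denom n * S = 16 * central_binom (2*n) * norm_poly n b"
    "gram_denom n * C = 16 * central_binom (2*n) * corr_poly n b"
    "gram_denom n * M = 16 * central_binom (2*n) * moment_poly n b"
    unfolding S_def C_def M_def K_def using trial_seq_sums \<open>1 \<le> n\<close> by blast+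
  ultimately have "S = 16 * central_binom (2*n) * norm_poly n b / gram_denom n"
    "C = 16 * central_binom (2*n) * corr_poly n b / gram_denom n"
    "M = 16 * central_binom (2*n) * moment_poly n b / gram_denom n"
    by (simp_all add: eq_divide_eq mult.commute)
  then have "0 < S" "C / S = trial_corr n b" "M / S = moment_poly n b / norm_poly n b"
    using \<open>0 < gram_denom n\<close> \<open>0 < central_binom (2*n)\<close> \<open>0 < norm_poly n b\<close>
    by (simp_all add: trial_corr_def)
  moreover have "trial_seq n b k = 0" if "k \<notin> {-K..K}" for k
    using trial_seq_eq_0 that unfolding K_def .
  ultimately show ?thesis
    using that admissible_normalize_finite[of K "trial_seq n b" s] assms(4)
    unfolding S_def C_def M_def by auto
qed

lemma V_upper_bound:
  assumes "0 < s" "trial_corr 20 0 \<le> 1 / sqrt (1 + s)"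
  shows "V s \<le> 1/8 * (1 / (1 - 1 / sqrt (1 + s)) - 1/2)"
proof -
  define tau where "tau = 1 / sqrt (1 + s)"
  have "tau < 1"
    using \<open>0 < s\<close> by (simp add: tau_def)
  obtain n b where nb: "20 \<le> n" "- (6/5) \<le> b" "b \<le> 0" "trial_corr (real n) b = tau"
    using trial_corr_attains[of tau] assms(2) \<open>tau < 1\<close> unfolding tau_def by blast
  then obtain x where "admissible s x" "time_spread x = moment_poly n b / norm_poly n b"
    using trial_seq_admissible unfolding tau_def by blast
  then have "V s \<le> moment_poly n b / norm_poly n b"
    using V_le_time_spread by metis
  also have "\<dots> \<le> 1/8 * (1 / (1 - tau) - 1/2)"
    using trial_moment_ratio_bound nb \<open>tau < 1\<close> by simp
  finally show ?thesis
    unfolding tau_def .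
qed

lemma V_upper_bound_near_zero:
  "\<exists>s0>0. \<forall>s. 0 < s \<and> s \<le> s0 \<longrightarrow> V s \<le> 1/8 * (sqrt (1 + s) / (sqrt (1 + s) - 1) - 1/2)"
proof -
  define tau0 where "tau0 = trial_corr 20 0"
  have "0 < tau0" "tau0 < 1"
    by (simp_all add: tau0_def trial_corr_def norm_poly_def corr_poly_def)
  have "V s \<le> 1/8 * (sqrt (1 + s) / (sqrt (1 + s) - 1) - 1/2)" if s: "0 < s" "s \<le> 1 / tau0\<^sup>2 - 1" for s
  proof -
    have "1 + s \<le> (1 / tau0)\<^sup>2"
      using s by (simp add: power_divide)
    then have "sqrt (1 + s) \<le> 1 / tau0"
      using real_sqrt_le_mono \<open>0 < tau0\<close> by fastforce
    then have "trial_corr 20 0 \<le> 1 / sqrt (1 + s)"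
      using s \<open>0 < tau0\<close> by (simp add: tau0_def field_simps)
    then have "V s \<le> 1/8 * (1 / (1 - 1 / sqrt (1 + s)) - 1/2)"
      using V_upper_bound s by blast
    also have "1 / (1 - 1 / sqrt (1 + s)) = sqrt (1 + s) / (sqrt (1 + s) - 1)"
      using s by (simp add: field_simps)
    finally show ?thesis .
  qed
  moreover have "0 < 1 / tau0\<^sup>2 - 1"
    using \<open>0 < tau0\<close> \<open>tau0 < 1\<close> by (simp add: field_simps power_less_one_iff)
  ultimately show ?thesis
    by blast
qed

theorem theorem3:
  shows "(\<forall>s::real. s > 0 \<longrightarrow> eta_p s \<ge> s * (1 - sqrt (s / (1 + s)))) \<and>
         (\<exists>s0::real. s0 > 0 \<and> (\<forall>s. 0 < s \<and> s \<le> s0 \<longrightarrow>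
            eta_p s \<le> s / 8 * (sqrt (1 + s) / (sqrt (1 + s) - 1) - 1 / 2)))"
proof (intro conjI allI impI)
  fix s :: real
  assume "0 < s"
  then show "eta_p s \<ge> s * (1 - sqrt (s / (1 + s)))"
    unfolding eta_p_def using V_lower_bound by (simp add: mult_left_mono)
next
  obtain s0 where "0 < s0"
    and upper: "\<And>s. 0 < s \<Longrightarrow> s \<le> s0 \<Longrightarrow> V s \<le> 1/8 * (sqrt (1 + s) / (sqrt (1 + s) - 1) - 1/2)"
    using V_upper_bound_near_zero by blast
  have "eta_p s \<le> s / 8 * (sqrt (1 + s) / (sqrt (1 + s) - 1) - 1 / 2)" if "0 < s \<and> s \<le> s0" for s
    using mult_left_mono[OF upper[of s], of s] that unfolding eta_p_def by simp
  with \<open>0 < s0\<close> show "\<exists>s0>0. \<forall>s. 0 < s \<and> s \<le> s0 \<longrightarrow> eta_p s \<le> s / 8 * (sqrt (1 + s) / (sqrt (1 + s) - 1) - 1 / 2)"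
    by blast
qed

end
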